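(* Consider the large system limit $B\to\infty$ with a fixed content catalogue $\mathcal{C}$ and fixed normalized popularities $\{\hat{\nu}_c\}$ (so that $\nu_c=\hat{\nu}_c\rho BU$). Then the ``hot-warm-cold'' placement strategy achieves an asymptotic absorbed traffic load (load served either by local service or by download from another box, normalized by $BU$) equal to $$\tilde{\rho} = \sum_{c=1}^{c^*}\rho_c + (\rho_{c^*+1}+1)\left(1 - \sum_{c=M}^{c^*} \frac{\rho_c}{1+\rho_c}\right),$$ which is an upper bound on the absorbed load achievable by any placement; hence the hot-warm-cold strategy is asymptotically optimal in this sense.
   Context: Pure Peer-to-Peer Network setting: there are $B$ boxes, each caching up to $M$ contents and able to serve up to $U$ concurrent requests (uplink bandwidth $U$ times the streaming rate, normalized to 1); all videos have duration 1. Requests for content $c$ arrive as a Poisson process of rate $\nu_c$, each originating from a box chosen uniformly at random; if the requesting box already caches $c$, the request receives ``local service'' consuming no bandwidth, otherwise it must be served by another box holding $c$, and it is accepted if the resulting vector of ongoing downloads can be matched to boxes holding the contents within their bandwidth (repacking allowed), otherwise rejected (loss network). The system load is $\rho=\sum_c\nu_c/(BU)$ and $\rho_c\triangleq\rho\hat{\nu}_c$, with contents indexed in descending order of popularity. Let $\tilde{m}_c$ be the fraction of boxes caching $c$ and $\lambda_c$ the fraction of system bandwidth used to serve $c$ (with $\lambda_c\le\tilde m_c$, $\sum_c\lambda_c\le1$, $\sum_c\tilde m_c=M$); the absorbed load is upper bounded by $\sum_c \rho_c\tilde m_c+[\rho_c(1-\tilde m_c)]\wedge\lambda_c$, and the maximum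 of this bound over all such $(\tilde m,\lambda)$ equals $\tilde\rho$ above. The ``hot-warm-cold'' placement: every box stores the $M-1$ most popular contents (``hot''); in its remaining slot, a fraction $\tilde m_c=\rho_c/(1+\rho_c)$ of boxes store content $c$ for $M\le c\le c^*$, and a fraction $\tilde m_{c^*+1}=1-\sum_{c=M}^{c^*}\rho_c/(1+\rho_c)$ store content $c^*+1$ (``warm''), where $c^*$ satisfies $\sum_{c=M}^{c^*}\rho_c/(1+\rho_c)\le1<\sum_{c=M}^{c^*+1}\rho_c/(1+\rho_c)$; all remaining contents (``cold'') are not cached. *)

theory Defs
  imports "HOL-Analysis.Analysis"
begin

text \<open>Contents are indexed 1..N in descending order of popularity; boxes are 0..B-1.
A placement for B boxes is a map P from boxes to the set of contents they cache.\<close>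

definition placement :: "nat \<Rightarrow> nat \<Rightarrow> nat \<Rightarrow> (nat \<Rightarrow> nat set) \<Rightarrow> bool" where
  "placement N M B P \<longleftrightarrow> (\<forall>b<B. P b \<subseteq> {1..N} \<and> card (P b) \<le> M)"

definition frac :: "nat \<Rightarrow> (nat \<Rightarrow> nat set) \<Rightarrow> nat \<Rightarrow> real" where
  "frac B P c = real (card {b \<in> {..<B}. c \<in> P b}) / real B"

text \<open>A vector n of ongoing (non-local) downloads is feasible if it can be matched
to boxes holding the contents, each box serving at most U downloads (repacking allowed).\<close>
definition feasible :: "nat \<Rightarrow> nat \<Rightarrow> nat \<Rightarrow> (nat \<Rightarrow> nat set) \<Rightarrow> (nat \<Rightarrow> nat) \<Rightarrow> bool" where
  "feasible N B U P n \<longleftrightarrow>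
     (\<forall>c. c \<notin> {1..N} \<longrightarrow> n c = 0) \<and>
     (\<exists>x :: nat \<Rightarrow> nat \<Rightarrow> nat.
        (\<forall>c b. 0 < x c b \<longrightarrow> c \<in> {1..N} \<and> b < B \<and> c \<in> P b) \<and>
        (\<forall>c\<in>{1..N}. (\<Sum>b<B. x c b) = n c) \<and>
        (\<forall>b<B. (\<Sum>c\<in>{1..N}. x c b) \<le> U))"

definition states :: "nat \<Rightarrow> nat \<Rightarrow> nat \<Rightarrow> (nat \<Rightarrow> nat set) \<Rightarrow> (nat \<Rightarrow> nat) set" where
  "states N B U P = {n. feasible N B U P n}"

text \<open>Arrival rate of requests for c: nu_c = nuhat_c * rho * B * U.
Non-local requests for c arrive at rate nu_c (1 - frac c).\<close>
definition offered :: "(nat \<Rightarrow> real) \<Rightarrow> real \<Rightarrow> nat \<Rightarrow> nat \<Rightarrow> (nat \<Rightarrow> nat set) \<Rightarrow> nat \<Rightarrow> real" where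
  "offered nuhat rho U B P c = nuhat c * rho * real B * real U * (1 - frac B P c)"

text \<open>Stationary distribution of the loss network: product form (truncated Poisson)
on the coordinate-convex set of feasible states (insensitive to the duration distribution).\<close>
definition weight :: "nat \<Rightarrow> (nat \<Rightarrow> real) \<Rightarrow> real \<Rightarrow> nat \<Rightarrow> nat \<Rightarrow> (nat \<Rightarrow> nat set) \<Rightarrow> (nat \<Rightarrow> nat) \<Rightarrow> real" where
  "weight N nuhat rho U B P n = (\<Prod>c\<in>{1..N}. offered nuhat rho U B P c ^ n c / fact (n c))"

definition stat_prob :: "nat \<Rightarrow> (nat \<Rightarrow> real) \<Rightarrow> real \<Rightarrow> nat \<Rightarrow> nat \<Rightarrow> (nat \<Rightarrow> nat set) \<Rightarrow> (nat \<Rightarrow> nat) \<Rightarrow> real" where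
  "stat_prob N nuhat rho U B P n =
     weight N nuhat rho U B P n / (\<Sum>m\<in>states N B U P. weight N nuhat rho U B P m)"

text \<open>Probability that an arriving non-local request for c is accepted (PASTA).\<close>
definition accept_prob :: "nat \<Rightarrow> (nat \<Rightarrow> real) \<Rightarrow> real \<Rightarrow> nat \<Rightarrow> nat \<Rightarrow> (nat \<Rightarrow> nat set) \<Rightarrow> nat \<Rightarrow> real" where
  "accept_prob N nuhat rho U B P c =
     (\<Sum>n\<in>{n \<in> states N B U P. n(c := Suc (n c)) \<in> states N B U P}. stat_prob N nuhat rho U B P n)"

definition absorbed :: "nat \<Rightarrow> (nat \<Rightarrow> real) \<Rightarrow> real \<Rightarrow> nat \<Rightarrow> nat \<Rightarrow> (nat \<Rightarrow> nat set) \<Rightarrow> real" where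
  "absorbed N nuhat rho U B P =
     (\<Sum>c\<in>{1..N}. nuhat c * rho * real B * real U * frac B P c
                 + offered nuhat rho U B P c * accept_prob N nuhat rho U B P c) / (real B * real U)"

definition hwc_frac :: "nat \<Rightarrow> (nat \<Rightarrow> real) \<Rightarrow> real \<Rightarrow> nat \<Rightarrow> nat \<Rightarrow> real" where
  "hwc_frac M nuhat rho cstar c =
     (if c \<le> cstar then rho * nuhat c / (1 + rho * nuhat c)
      else 1 - (\<Sum>d\<in>{M..cstar}. rho * nuhat d / (1 + rho * nuhat d)))"

definition hwc_seq :: "nat \<Rightarrow> nat \<Rightarrow> (nat \<Rightarrow> real) \<Rightarrow> real \<Rightarrow> nat \<Rightarrow> (nat \<Rightarrow> nat \<Rightarrow> nat set) \<Rightarrow> bool" where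
  "hwc_seq N M nuhat rho cstar P \<longleftrightarrow>
     (\<forall>B. \<forall>b<B. \<exists>w\<in>{M..cstar+1}. P B b = {1..M-1} \<union> {w}) \<and>
     (\<forall>c\<in>{M..cstar+1}. (\<lambda>B. frac B (P B) c) \<longlonglongrightarrow> hwc_frac M nuhat rho cstar c)"

definition rho_tilde :: "nat \<Rightarrow> (nat \<Rightarrow> real) \<Rightarrow> real \<Rightarrow> nat \<Rightarrow> real" where
  "rho_tilde M nuhat rho cstar =
     (\<Sum>c\<in>{1..cstar}. rho * nuhat c)
     + (rho * nuhat (cstar+1) + 1) * (1 - (\<Sum>c\<in>{M..cstar}. rho * nuhat c / (1 + rho * nuhat c)))"

end

theory Submission
  imports Defs
begin

text \<open>The loss network has a product-form stationary distribution on a coordinate-convex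
  state space, so by Little's law an arriving request for \<open>c\<close> is accepted at rate
  \<open>E[n\<^sub>c]\<close>. The absorbed load is therefore \<open>\<Sum>\<^sub>c \<rho>\<^sub>c f\<^sub>c + t\<^sub>c\<close>, with \<open>f\<^sub>c\<close> the fraction of
  boxes caching \<open>c\<close> and \<open>t\<^sub>c = E[n\<^sub>c]/(BU)\<close>. For every placement these satisfy
  \<open>\<Sum> f \<le> M\<close>, \<open>\<Sum> t \<le> 1\<close>, \<open>t\<^sub>c \<le> f\<^sub>c\<close> and \<open>t\<^sub>c \<le> \<rho>\<^sub>c(1 - f\<^sub>c)\<close>, and an explicit dual certificate
  bounds the resulting linear program by \<open>rho_tilde\<close>.

  Under hot-warm-cold the hot contents are served locally, and each warm content \<open>c\<close> is
  the only non-hot content of its holders, so it forms an Erlang loss system with offered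
  load \<open>\<rho>\<^sub>c(1 - f\<^sub>c)BU\<close> and \<open>f\<^sub>c BU\<close> servers. The target fractions make every warm
  system critically or over-loaded, and then its mean occupancy is asymptotically the full
  capacity \<open>f\<^sub>c BU\<close>; summing up gives exactly \<open>rho_tilde\<close>.\<close>

section \<open>Feasible states of the loss network\<close>

abbreviation holders :: "nat \<Rightarrow> (nat \<Rightarrow> nat set) \<Rightarrow> nat \<Rightarrow> nat set" where
  "holders B P c \<equiv> {b \<in> {..<B}. c \<in> P b}"

lemma card_holders_le: "card (holders B P c) \<le> B"
  by (rule order_trans[OF card_mono card_lessThan[THEN eq_imp_le]]) auto

lemma feasible_outside_catalogue:
  "feasible N B U P n \<Longrightarrow> c \<notin> {1..N} \<Longrightarrow> n c = 0"
  unfolding feasible_def by blast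

lemma feasible_le_holders:
  assumes "feasible N B U P n" "c \<in> {1..N}"
  shows "n c \<le> U * card (holders B P c)"
proof -
  obtain x where supp: "\<forall>c b. 0 < x c b \<longrightarrow> c \<in> {1..N} \<and> b < B \<and> c \<in> P b"
    and dem: "\<forall>c\<in>{1..N}. (\<Sum>b<B. x c b) = n c"
    and cap: "\<forall>b<B. (\<Sum>c\<in>{1..N}. x c b) \<le> U"
    using assms(1) unfolding feasible_def by blast
  have "n c = (\<Sum>b<B. x c b)" using dem assms(2) by simp
  also have "\<dots> = (\<Sum>b\<in>holders B P c. x c b)"
    by (rule sum.mono_neutral_right) (use supp in auto)
  also have "\<dots> \<le> (\<Sum>b\<in>holders B P c. U)"
  proof (rule sum_mono)
    fix b assume b: "b \<in> holders B P c"
    have "x c b \<le> (\<Sum>c\<in>{1..N}. x c b)" using assms(2) by (intro member_le_sum) auto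
    thus "x c b \<le> U" using cap b by fastforce
  qed
  finally show ?thesis by (simp add: mult.commute)
qed

lemma feasible_sum_le:
  assumes "feasible N B U P n"
  shows "(\<Sum>c\<in>{1..N}. n c) \<le> B * U"
proof -
  obtain x where dem: "\<forall>c\<in>{1..N}. (\<Sum>b<B. x c b) = n c"
    and cap: "\<forall>b<B. (\<Sum>c\<in>{1..N}. x c b) \<le> U"
    using assms unfolding feasible_def by blast
  have "(\<Sum>c\<in>{1..N}. n c) = (\<Sum>c\<in>{1..N}. \<Sum>b<B. x c b)" using dem by simp
  also have "\<dots> = (\<Sum>b<B. \<Sum>c\<in>{1..N}. x c b)" by (rule sum.swap)
  also have "\<dots> \<le> (\<Sum>b<B. U)" using cap by (intro sum_mono) auto
  finally show ?thesis by simp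
qed

lemma finite_states: "finite (states N B U P)"
proof (rule finite_subset)
  show "states N B U P \<subseteq> {n. \<forall>c. (c \<in> {1..N} \<longrightarrow> n c \<in> {..U*B}) \<and> (c \<notin> {1..N} \<longrightarrow> n c = 0)}"
  proof (intro subsetI CollectI allI conjI impI)
    fix n c assume n: "n \<in> states N B U P"
    { assume c: "c \<in> {1..N}"
      have "n c \<le> U * card (holders B P c)"
        using n c feasible_le_holders unfolding states_def by blast
      also have "\<dots> \<le> U * B" by (intro mult_le_mono2 card_holders_le)
      finally show "n c \<in> {..U*B}" by simp }
    { assume "c \<notin> {1..N}"
      thus "n c = 0" using n feasible_outside_catalogue unfolding states_def by blast }
  qed
  show "finite {n. \<forall>c. (c \<in> {1..N} \<longrightarrow> n c \<in> {..U*B}) \<and> (c \<notin> {1..N} \<longrightarrow> n c = 0)}"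
    by (rule finite_set_of_finite_funs) simp_all
qed

lemma zero_in_states: "(\<lambda>_. 0) \<in> states N B U P"
  unfolding states_def feasible_def by (auto intro: exI[of _ "\<lambda>_ _. 0"])

lemma states_coordinate_convex:
  assumes "n \<in> states N B U P" "0 < n c"
  shows "n(c := n c - 1) \<in> states N B U P"
proof -
  obtain x where supp: "\<forall>c b. 0 < x c b \<longrightarrow> c \<in> {1..N} \<and> b < B \<and> c \<in> P b"
    and dem: "\<forall>c\<in>{1..N}. (\<Sum>b<B. x c b) = n c"
    and cap: "\<forall>b<B. (\<Sum>c\<in>{1..N}. x c b) \<le> U"
    and out: "\<forall>c. c \<notin> {1..N} \<longrightarrow> n c = 0"
    using assms(1) unfolding states_def feasible_def by blast
  have c: "c \<in> {1..N}" using out assms(2) by (metis less_irrefl)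
  then obtain b where b: "b < B" "0 < x c b"
    using dem assms(2) by (metis gr_zeroI lessThan_iff sum.neutral)
  define x' where "x' = x(c := (x c)(b := x c b - 1))"
  have le: "x' d e \<le> x d e" for d e unfolding x'_def by auto
  have "(\<Sum>e\<in>{..<B}-{b}. x' c e) = (\<Sum>e\<in>{..<B}-{b}. x c e)"
    by (rule sum.cong) (auto simp: x'_def)
  hence dec: "(\<Sum>e<B. x' c e) = n c - 1"
    using b dem c by (simp add: sum.remove[of "{..<B}" b] x'_def)
  show ?thesis unfolding states_def feasible_def
  proof (intro CollectI conjI exI[of _ x'])
    show "\<forall>d. d \<notin> {1..N} \<longrightarrow> (n(c := n c - 1)) d = 0" using out c by auto
    show "\<forall>d e. 0 < x' d e \<longrightarrow> d \<in> {1..N} \<and> e < B \<and> d \<in> P e"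
      using supp le by (meson less_le_trans)
    show "\<forall>d\<in>{1..N}. (\<Sum>e<B. x' d e) = (n(c := n c - 1)) d"
      using dem dec by (auto simp: x'_def)
    show "\<forall>e<B. (\<Sum>d\<in>{1..N}. x' d e) \<le> U"
      using cap by (meson le order_trans sum_mono)
  qed
qed

section \<open>Product form and Little's law\<close>

definition poisson_term :: "real \<Rightarrow> nat \<Rightarrow> real" where
  "poisson_term a k = a ^ k / fact k"

lemma poisson_term_0 [simp]: "poisson_term a 0 = 1"
  by (simp add: poisson_term_def)

lemma poisson_term_nonneg: "0 \<le> a \<Longrightarrow> 0 \<le> poisson_term a k"
  by (simp add: poisson_term_def)

lemma poisson_term_Suc: "real (Suc k) * poisson_term a (Suc k) = a * poisson_term a k"
  by (simp add: poisson_term_def field_simps del: of_nat_Suc)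

lemma weight_eq_prod: "weight N nuhat rho U B P n = (\<Prod>c\<in>{1..N}. poisson_term (offered nuhat rho U B P c) (n c))"
  by (simp add: weight_def poisson_term_def)

lemma weight_factor:
  assumes "c \<in> {1..N}"
  shows "weight N nuhat rho U B P n =
    poisson_term (offered nuhat rho U B P c) (n c) * weight N nuhat rho U B P (n(c := 0))"
proof -
  let ?g = "\<lambda>d k. poisson_term (offered nuhat rho U B P d) k"
  have "(\<Prod>d\<in>{1..N}. ?g d ((n(c := 0)) d)) = (\<Prod>d\<in>{1..N}-{c}. ?g d ((n(c := 0)) d))"
    using prod.remove[OF finite_atLeastAtMost assms, of "\<lambda>d. ?g d ((n(c := 0)) d)"] by simp
  also have "\<dots> = (\<Prod>d\<in>{1..N}-{c}. ?g d (n d))"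
    by (rule prod.cong) auto
  finally show ?thesis
    using prod.remove[OF finite_atLeastAtMost assms, of "\<lambda>d. ?g d (n d)"] by (simp add: weight_eq_prod)
qed

lemma weight_zero_state: "weight N nuhat rho U B P (\<lambda>_. 0) = 1"
  by (simp add: weight_eq_prod)

lemma weight_nonneg:
  "\<forall>c\<in>{1..N}. 0 \<le> offered nuhat rho U B P c \<Longrightarrow> 0 \<le> weight N nuhat rho U B P n"
  unfolding weight_eq_prod by (intro prod_nonneg) (simp add: poisson_term_nonneg)

lemma weight_sum_pos:
  assumes "\<forall>c\<in>{1..N}. 0 \<le> offered nuhat rho U B P c"
  shows "0 < (\<Sum>m\<in>states N B U P. weight N nuhat rho U B P m)"
proof -
  have "weight N nuhat rho U B P (\<lambda>_. 0) \<le> (\<Sum>m\<in>states N B U P. weight N nuhat rho U B P m)"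
    using weight_nonneg[OF assms] finite_states zero_in_states by (intro member_le_sum)
  thus ?thesis by (simp add: weight_zero_state)
qed

lemma frac_nonneg: "0 \<le> frac B P c"
  by (simp add: frac_def)

lemma frac_le_1: "frac B P c \<le> 1"
  using card_holders_le by (cases "B = 0") (simp_all add: frac_def)

lemma offered_nonneg: "0 \<le> nuhat c \<Longrightarrow> 0 \<le> rho \<Longrightarrow> 0 \<le> offered nuhat rho U B P c"
  by (simp add: offered_def frac_le_1)

definition mean_downloads :: "nat \<Rightarrow> (nat \<Rightarrow> real) \<Rightarrow> real \<Rightarrow> nat \<Rightarrow> nat \<Rightarrow> (nat \<Rightarrow> nat set) \<Rightarrow> nat \<Rightarrow> real" where
  "mean_downloads N nuhat rho U B P c =
     (\<Sum>n\<in>states N B U P. weight N nuhat rho U B P n * real (n c)) /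
     (\<Sum>n\<in>states N B U P. weight N nuhat rho U B P n)"

text \<open>The shift \<open>n \<mapsto> n + e\<^sub>c\<close> maps the states accepting c onto the
  states with \<open>n c > 0\<close> (coordinate convexity), and the product form turns it into
  multiplication of the weight by \<open>a\<^sub>c / (n c + 1)\<close>.\<close>
lemma offered_mult_accept_prob:
  assumes c: "c \<in> {1..N}"
  shows "offered nuhat rho U B P c * accept_prob N nuhat rho U B P c = mean_downloads N nuhat rho U B P c"
proof -
  let ?S = "states N B U P" and ?w = "weight N nuhat rho U B P" and ?a = "offered nuhat rho U B P c"
  let ?A = "{n \<in> ?S. n(c := Suc (n c)) \<in> ?S}" and ?S1 = "{m \<in> ?S. 0 < m c}"
  have shift: "bij_betw (\<lambda>n. n(c := Suc (n c))) ?A ?S1"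
  proof (rule bij_betw_byWitness[where f' = "\<lambda>m. m(c := m c - 1)"])
    show "(\<lambda>m. m(c := m c - 1)) ` ?S1 \<subseteq> ?A"
      using states_coordinate_convex by fastforce
  qed auto
  have "(\<Sum>n\<in>?S. ?w n * real (n c)) = (\<Sum>m\<in>?S1. ?w m * real (m c))"
    by (rule sum.mono_neutral_right) (use finite_states in auto)
  also have "\<dots> = (\<Sum>n\<in>?A. ?w (n(c := Suc (n c))) * real (Suc (n c)))"
    by (subst sum.reindex_bij_betw[OF shift, symmetric]) simp
  also have "\<dots> = (\<Sum>n\<in>?A. ?a * ?w n)"
  proof (rule sum.cong[OF refl])
    fix n
    show "?w (n(c := Suc (n c))) * real (Suc (n c)) = ?a * ?w n"
      using weight_factor[OF c, of nuhat rho U B P "n(c := Suc (n c))"]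
        weight_factor[OF c, of nuhat rho U B P n] poisson_term_Suc[of "n c" ?a]
      by (simp add: ac_simps del: of_nat_Suc)
  qed
  finally show ?thesis
    by (simp add: accept_prob_def stat_prob_def mean_downloads_def sum_divide_distrib sum_distrib_left)
qed

lemma accept_prob_le_1:
  assumes "\<forall>c\<in>{1..N}. 0 \<le> offered nuhat rho U B P c"
  shows "accept_prob N nuhat rho U B P c \<le> 1"
proof -
  let ?S = "states N B U P" and ?w = "weight N nuhat rho U B P"
  have "(\<Sum>n\<in>{n \<in> ?S. n(c := Suc (n c)) \<in> ?S}. ?w n) \<le> (\<Sum>m\<in>?S. ?w m)"
    using weight_nonneg[OF assms] finite_states by (intro sum_mono2) auto
  thus ?thesis using weight_sum_pos[OF assms]
    by (simp add: accept_prob_def stat_prob_def sum_divide_distrib[symmetric])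
qed

lemma mean_downloads_nonneg:
  "\<forall>c\<in>{1..N}. 0 \<le> offered nuhat rho U B P c \<Longrightarrow> 0 \<le> mean_downloads N nuhat rho U B P c"
  unfolding mean_downloads_def by (intro divide_nonneg_nonneg sum_nonneg mult_nonneg_nonneg weight_nonneg) auto

lemma mean_downloads_le_holders:
  assumes nn: "\<forall>c\<in>{1..N}. 0 \<le> offered nuhat rho U B P c" and c: "c \<in> {1..N}"
  shows "mean_downloads N nuhat rho U B P c \<le> real U * real (card (holders B P c))"
proof -
  let ?S = "states N B U P" and ?w = "weight N nuhat rho U B P"
  let ?C = "real U * real (card (holders B P c))"
  have "(\<Sum>n\<in>?S. ?w n * real (n c)) \<le> (\<Sum>n\<in>?S. ?w n * ?C)"
  proof (intro sum_mono mult_left_mono weight_nonneg[OF nn])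
    fix n assume "n \<in> ?S"
    hence "n c \<le> U * card (holders B P c)" using feasible_le_holders c unfolding states_def by blast
    thus "real (n c) \<le> ?C" by (metis of_nat_le_iff of_nat_mult)
  qed
  thus ?thesis using weight_sum_pos[OF nn]
    by (simp add: mean_downloads_def divide_le_eq sum_distrib_right[symmetric] mult.commute)
qed

lemma sum_mean_downloads_le:
  assumes nn: "\<forall>c\<in>{1..N}. 0 \<le> offered nuhat rho U B P c"
  shows "(\<Sum>c\<in>{1..N}. mean_downloads N nuhat rho U B P c) \<le> real B * real U"
proof -
  let ?S = "states N B U P" and ?w = "weight N nuhat rho U B P"
  have "(\<Sum>c\<in>{1..N}. \<Sum>n\<in>?S. ?w n * real (n c)) = (\<Sum>n\<in>?S. ?w n * real (\<Sum>c\<in>{1..N}. n c))"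
    by (subst sum.swap) (simp add: sum_distrib_left)
  also have "\<dots> \<le> (\<Sum>n\<in>?S. ?w n * (real B * real U))"
  proof (intro sum_mono mult_left_mono weight_nonneg[OF nn])
    fix n assume "n \<in> ?S"
    hence "(\<Sum>c\<in>{1..N}. n c) \<le> B * U" using feasible_sum_le unfolding states_def by blast
    thus "real (\<Sum>c\<in>{1..N}. n c) \<le> real B * real U" by (metis of_nat_le_iff of_nat_mult)
  qed
  also have "\<dots> = real B * real U * (\<Sum>n\<in>?S. ?w n)"
    by (simp add: sum_distrib_left mult.commute)
  finally show ?thesis using weight_sum_pos[OF nn]
    by (simp add: mean_downloads_def sum_divide_distrib[symmetric] divide_le_eq)
qed

lemma absorbed_eq_sum:
  assumes "0 < B" "0 < U" and nn: "\<forall>c\<in>{1..N}. 0 \<le> offered nuhat rho U B P c"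
  shows "absorbed N nuhat rho U B P =
    (\<Sum>c\<in>{1..N}. rho * nuhat c * frac B P c + mean_downloads N nuhat rho U B P c / (real B * real U))"
  unfolding absorbed_def sum_divide_distrib
  using assms offered_mult_accept_prob by (intro sum.cong) (auto simp: add_divide_distrib)

section \<open>The linear-programming upper bound\<close>

lemma dual_bound_hot:
  fixes \<rho> f t \<alpha> r :: real
  assumes "f \<le> 1" "0 \<le> t" "t \<le> \<rho> * (1 - f)" "r \<le> \<alpha>" "\<alpha> * (1 + \<rho>) \<le> \<rho> * (1 + r)"
  shows "\<rho> * f + t \<le> \<alpha> * f + (1 + r - \<alpha>) * t + (\<rho> - \<alpha>)"
proof -
  have "(\<alpha> - r) * t \<le> (\<alpha> - r) * (\<rho> * (1 - f))" using assms by (intro mult_left_mono) auto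
  moreover have "0 \<le> (\<rho> * (1 + r) - \<alpha> * (1 + \<rho>)) * (1 - f)" using assms by auto
  ultimately show ?thesis by (simp add: algebra_simps)
qed

lemma dual_bound_warm:
  fixes \<rho> f t \<alpha> r :: real
  assumes "0 \<le> f" "t \<le> \<rho> * (1 - f)" "t \<le> f" "r \<le> \<alpha>" "r \<le> \<rho>" "0 \<le> \<rho>"
    "\<rho> * (1 + r) \<le> \<alpha> * (1 + \<rho>)"
  shows "\<rho> * f + t \<le> \<alpha> * f + (1 + r - \<alpha>) * t + (\<rho> - (1 + r) * (\<rho> / (1 + \<rho>)))"
proof -
  define m where "m = \<rho> / (1 + \<rho>)"
  have m: "m * (1 + \<rho>) = \<rho>" unfolding m_def using assms by simp
  show ?thesis
  proof (cases "f \<le> m")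
    case True
    have "(\<alpha> - r) * t \<le> (\<alpha> - r) * f" using assms by (intro mult_left_mono) auto
    moreover have "(\<rho> - r) * f \<le> (\<rho> - r) * m" using True assms by (intro mult_left_mono) auto
    ultimately show ?thesis using m unfolding m_def[symmetric] by (simp add: algebra_simps)
  next
    case False
    have "(\<alpha> - r) * t \<le> (\<alpha> - r) * (\<rho> * (1 - f))" using assms by (intro mult_left_mono) auto
    moreover have "0 \<le> (\<alpha> * (1 + \<rho>) - \<rho> * (1 + r)) * (f - m)" using assms False by auto
    moreover have "\<alpha> * (m * (1 + \<rho>)) = \<alpha> * \<rho>" "r * (m * (1 + \<rho>)) = r * \<rho>" using m by auto
    ultimately show ?thesis using m unfolding m_def[symmetric] by (simp add: algebra_simps)
  qed
qed

lemma dual_bound_cold: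
  fixes \<rho> f t \<alpha> r :: real
  assumes "0 \<le> f" "t \<le> f" "r \<le> \<alpha>" "\<rho> \<le> r"
  shows "\<rho> * f + t \<le> \<alpha> * f + (1 + r - \<alpha>) * t"
proof -
  have "(\<alpha> - r) * t \<le> (\<alpha> - r) * f" using assms by (intro mult_left_mono) auto
  moreover have "(\<rho> - r) * f \<le> 0" using assms by (simp add: mult_nonpos_nonneg)
  ultimately show ?thesis by (simp add: algebra_simps)
qed

lemma sum_hot_warm_cold_split:
  fixes h :: "nat \<Rightarrow> real"
  assumes "1 \<le> M" "M \<le> cstar" "cstar + 1 \<le> N"
  shows "(\<Sum>c\<in>{1..N}. h c) = (\<Sum>c\<in>{1..<M}. h c) + (\<Sum>c\<in>{M..cstar}. h c) + (\<Sum>c\<in>{Suc cstar..N}. h c)"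
proof -
  have "{1..N} = {1..<M} \<union> {M..cstar} \<union> {Suc cstar..N}" using assms by auto
  moreover have "{1..<M} \<inter> {M..cstar} = {}" "({1..<M} \<union> {M..cstar}) \<inter> {Suc cstar..N} = {}"
    using assms by auto
  ultimately show ?thesis by (simp add: sum.union_disjoint)
qed

lemma sum_hot_warm_split:
  fixes h :: "nat \<Rightarrow> real"
  assumes "1 \<le> M" "M \<le> cstar"
  shows "(\<Sum>c\<in>{1..cstar}. h c) = (\<Sum>c\<in>{1..<M}. h c) + (\<Sum>c\<in>{M..cstar}. h c)"
proof -
  have "{1..cstar} = {1..<M} \<union> {M..cstar}" using assms by auto
  thus ?thesis by (simp add: sum.union_disjoint ivl_disj_int)
qed

text \<open>The value of the dual certificate: multiplier \<open>\<alpha>\<close> on \<open>\<Sum> f \<le> M\<close>, \<open>1 + r - \<alpha>\<close> on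
  \<open>\<Sum> t \<le> 1\<close>, and the slacks of the three lemmas above on the hot and warm contents.\<close>
lemma dual_certificate_value:
  fixes \<rho> :: "nat \<Rightarrow> real" and \<alpha> r :: real
  assumes "1 \<le> M" "M \<le> cstar"
  shows "\<alpha> * M + (1 + r - \<alpha>) + ((\<Sum>c\<in>{1..<M}. \<rho> c - \<alpha>) + (\<Sum>c\<in>{M..cstar}. \<rho> c - (1 + r) * (\<rho> c / (1 + \<rho> c))))
     = (\<Sum>c\<in>{1..cstar}. \<rho> c) + (r + 1) * (1 - (\<Sum>c\<in>{M..cstar}. \<rho> c / (1 + \<rho> c)))"
proof -
  have "(\<Sum>c\<in>{1..<M}. \<rho> c - \<alpha>) = (\<Sum>c\<in>{1..<M}. \<rho> c) - (M - 1) * \<alpha>"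
    using assms by (simp add: sum_subtractf of_nat_diff)
  moreover have "(\<Sum>c\<in>{M..cstar}. \<rho> c - (1 + r) * (\<rho> c / (1 + \<rho> c))) =
      (\<Sum>c\<in>{M..cstar}. \<rho> c) - (1 + r) * (\<Sum>c\<in>{M..cstar}. \<rho> c / (1 + \<rho> c))"
    by (simp add: sum_subtractf sum_distrib_left)
  ultimately show ?thesis
    using sum_hot_warm_split[OF assms, of \<rho>] assms by (simp add: algebra_simps of_nat_diff)
qed

lemma dual_certificate_termwise:
  fixes \<rho> :: "nat \<Rightarrow> real" and f t :: real
  assumes M: "1 \<le> M" "M \<le> cstar" "cstar + 1 \<le> N" and c: "c \<in> {1..N}"
    and pos: "\<forall>c\<in>{1..N}. 0 \<le> \<rho> c"
    and mono: "\<forall>c c'. 1 \<le> c \<and> c \<le> c' \<and> c' \<le> N \<longrightarrow> \<rho> c' \<le> \<rho> c"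
    and F: "0 \<le> f" "f \<le> 1" "0 \<le> t" "t \<le> f" "t \<le> \<rho> c * (1 - f)"
  defines "r \<equiv> \<rho> (cstar + 1)"
  defines "\<alpha> \<equiv> \<rho> M * (1 + r) / (1 + \<rho> M)"
  shows "\<rho> c * f + t \<le> \<alpha> * f + (1 + r - \<alpha>) * t +
    (if c < M then \<rho> c - \<alpha> else if c \<le> cstar then \<rho> c - (1 + r) * (\<rho> c / (1 + \<rho> c)) else 0)"
proof -
  have r0: "0 \<le> r" and rpM: "r \<le> \<rho> M" and pM0: "0 \<le> \<rho> M"
    using pos mono M unfolding r_def by auto
  have \<alpha>r: "r \<le> \<alpha>" unfolding \<alpha>_def using rpM pM0 r0 by (simp add: field_simps)
  have \<alpha>_gap: "\<alpha> * (1 + p) - p * (1 + r) = (1 + r) * (\<rho> M - p) / (1 + \<rho> M)" for p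
    unfolding \<alpha>_def using pM0 by (simp add: field_simps)
  consider "c < M" | "M \<le> c" "c \<le> cstar" | "cstar < c" by linarith
  thus ?thesis
  proof cases
    case 1
    have "\<rho> M \<le> \<rho> c" using mono c 1 M by auto
    hence "(1 + r) * (\<rho> M - \<rho> c) / (1 + \<rho> M) \<le> 0"
      using r0 pM0 by (intro divide_nonpos_pos mult_nonneg_nonpos) auto
    hence "\<alpha> * (1 + \<rho> c) \<le> \<rho> c * (1 + r)" using \<alpha>_gap[of "\<rho> c"] by linarith
    thus ?thesis using dual_bound_hot[OF F(2,3,5) \<alpha>r] 1 by simp
  next
    case 2
    have "\<rho> c \<le> \<rho> M" "r \<le> \<rho> c" using mono c 2 M unfolding r_def by auto
    hence "0 \<le> (1 + r) * (\<rho> M - \<rho> c) / (1 + \<rho> M)" using r0 pM0 by simp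
    hence "\<rho> c * (1 + r) \<le> \<alpha> * (1 + \<rho> c)" using \<alpha>_gap[of "\<rho> c"] by linarith
    thus ?thesis using dual_bound_warm[OF F(1,5,4) \<alpha>r] 2 pos c \<open>r \<le> \<rho> c\<close> by simp
  next
    case 3
    have "\<rho> c \<le> r" using mono c 3 M unfolding r_def by auto
    thus ?thesis using dual_bound_cold[OF F(1,4) \<alpha>r] 3 M by simp
  qed
qed

text \<open>Weak duality for the linear program bounding the absorbed load \<open>\<Sum> \<rho>\<^sub>c f\<^sub>c + t\<^sub>c\<close>
  over fractions \<open>f\<close> and download shares \<open>t\<close>.\<close>
lemma lp_value_bound:
  fixes \<rho> f t :: "nat \<Rightarrow> real"
  assumes M: "1 \<le> M" "M \<le> cstar" "cstar + 1 \<le> N"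
    and pos: "\<forall>c\<in>{1..N}. 0 \<le> \<rho> c"
    and mono: "\<forall>c c'. 1 \<le> c \<and> c \<le> c' \<and> c' \<le> N \<longrightarrow> \<rho> c' \<le> \<rho> c"
    and ft: "\<forall>c\<in>{1..N}. 0 \<le> f c \<and> f c \<le> 1 \<and> 0 \<le> t c \<and> t c \<le> f c \<and> t c \<le> \<rho> c * (1 - f c)"
    and sf: "(\<Sum>c\<in>{1..N}. f c) \<le> M" and st: "(\<Sum>c\<in>{1..N}. t c) \<le> 1"
  shows "(\<Sum>c\<in>{1..N}. \<rho> c * f c + t c) \<le>
    (\<Sum>c\<in>{1..cstar}. \<rho> c) + (\<rho> (cstar+1) + 1) * (1 - (\<Sum>c\<in>{M..cstar}. \<rho> c / (1 + \<rho> c)))"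
proof -
  define r where "r = \<rho> (cstar + 1)"
  define \<alpha> where "\<alpha> = \<rho> M * (1 + r) / (1 + \<rho> M)"
  define h where "h c = (if c < M then \<rho> c - \<alpha> else if c \<le> cstar then \<rho> c - (1 + r) * (\<rho> c / (1 + \<rho> c)) else 0)" for c
  have r0: "0 \<le> r" and rpM: "r \<le> \<rho> M" and pM0: "0 \<le> \<rho> M"
    using pos mono M unfolding r_def by auto
  have \<alpha>0: "0 \<le> \<alpha>" and \<beta>0: "0 \<le> 1 + r - \<alpha>"
    unfolding \<alpha>_def using rpM pM0 r0 by (simp_all add: field_simps)
  have "(\<Sum>c\<in>{1..N}. \<rho> c * f c + t c) \<le> (\<Sum>c\<in>{1..N}. \<alpha> * f c + (1 + r - \<alpha>) * t c + h c)"
    using dual_certificate_termwise[OF M _ pos mono] ft unfolding h_def r_def \<alpha>_def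
    by (intro sum_mono) simp
  also have "\<dots> = \<alpha> * (\<Sum>c\<in>{1..N}. f c) + (1 + r - \<alpha>) * (\<Sum>c\<in>{1..N}. t c) + (\<Sum>c\<in>{1..N}. h c)"
    by (simp add: sum.distrib sum_distrib_left)
  also have "\<dots> \<le> \<alpha> * M + (1 + r - \<alpha>) + (\<Sum>c\<in>{1..N}. h c)"
    using mult_left_mono[OF sf \<alpha>0] mult_left_mono[OF st \<beta>0] by simp
  also have "(\<Sum>c\<in>{1..N}. h c) = (\<Sum>c\<in>{1..<M}. \<rho> c - \<alpha>) + (\<Sum>c\<in>{M..cstar}. \<rho> c - (1 + r) * (\<rho> c / (1 + \<rho> c)))"
    using sum_hot_warm_cold_split[OF M, of h] M by (simp add: h_def)
  finally show ?thesis unfolding dual_certificate_value[OF M(1,2)] r_def by simp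
qed

section \<open>Upper bound for every placement\<close>

lemma sum_card_holders_le:
  assumes "placement N M B P"
  shows "(\<Sum>c\<in>{1..N}. card (holders B P c)) \<le> B * M"
proof -
  have count: "card {x \<in> A. Q x} = (\<Sum>x\<in>A. if Q x then 1 else 0)" if "finite A" for A and Q :: "nat \<Rightarrow> bool"
    using that by (simp add: sum.inter_filter[symmetric])
  have "(\<Sum>c\<in>{1..N}. card (holders B P c)) = (\<Sum>c\<in>{1..N}. \<Sum>b<B. if c \<in> P b then 1 else 0)"
    by (simp only: count finite_lessThan)
  also have "\<dots> = (\<Sum>b<B. \<Sum>c\<in>{1..N}. if c \<in> P b then 1 else 0)"
    by (rule sum.swap)
  also have "\<dots> = (\<Sum>b<B. card (P b))"
  proof (rule sum.cong[OF refl])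
    fix b assume "b \<in> {..<B}"
    hence "P b \<subseteq> {1..N}" using assms unfolding placement_def by blast
    hence "{c \<in> {1..N}. c \<in> P b} = P b" by blast
    thus "(\<Sum>c\<in>{1..N}. if c \<in> P b then 1 else 0) = card (P b)"
      using count[of "{1..N}" "\<lambda>c. c \<in> P b"] by simp
  qed
  also have "\<dots> \<le> (\<Sum>b<B. M)" using assms unfolding placement_def by (intro sum_mono) auto
  finally show ?thesis by simp
qed

lemma sum_frac_le:
  assumes "placement N M B P" "0 < B"
  shows "(\<Sum>c\<in>{1..N}. frac B P c) \<le> M"
proof -
  have "(\<Sum>c\<in>{1..N}. real (card (holders B P c))) \<le> real B * real M"
    using sum_card_holders_le[OF assms(1)] by (simp only: of_nat_sum[symmetric] of_nat_mult[symmetric] of_nat_le_iff)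
  thus ?thesis using assms(2)
    by (simp add: frac_def sum_divide_distrib[symmetric] divide_le_eq mult.commute)
qed

lemma M_le_cstar:
  fixes nuhat :: "nat \<Rightarrow> real"
  assumes "1 \<le> M" "0 < rho" "\<forall>c\<in>{1..N}. 0 \<le> nuhat c" "cstar + 1 \<le> N"
    and "1 < (\<Sum>c\<in>{M..cstar+1}. rho * nuhat c / (1 + rho * nuhat c))"
  shows "M \<le> cstar"
proof (rule ccontr)
  assume "\<not> M \<le> cstar"
  then consider "{M..cstar+1} = {}" | "M = cstar + 1" "{M..cstar+1} = {M}" by force
  thus False
  proof cases
    case 2
    hence "0 \<le> rho * nuhat M" using assms by auto
    thus False using assms(5) 2 by simp
  qed (use assms(5) in simp)
qed

lemma download_share_bounds:
  assumes B: "0 < B" and U: "0 < U" and nn: "\<forall>c\<in>{1..N}. 0 \<le> offered nuhat rho U B P c"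
    and c: "c \<in> {1..N}"
  defines "t \<equiv> mean_downloads N nuhat rho U B P c / (real B * real U)"
  shows "0 \<le> t" "t \<le> frac B P c" "t \<le> rho * nuhat c * (1 - frac B P c)"
proof -
  have BU: "0 < real B * real U" using B U by simp
  show "0 \<le> t" unfolding t_def using mean_downloads_nonneg[OF nn] BU by simp
  have "real (card (holders B P c)) = frac B P c * real B" unfolding frac_def using B by simp
  hence "mean_downloads N nuhat rho U B P c \<le> real U * (frac B P c * real B)"
    using mean_downloads_le_holders[OF nn c] by simp
  thus "t \<le> frac B P c" unfolding t_def using BU by (simp add: divide_le_eq algebra_simps)
  have "offered nuhat rho U B P c * accept_prob N nuhat rho U B P c \<le> offered nuhat rho U B P c * 1"
    using accept_prob_le_1[OF nn] nn c by (intro mult_left_mono) auto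
  hence "mean_downloads N nuhat rho U B P c \<le> rho * nuhat c * (1 - frac B P c) * (real B * real U)"
    unfolding offered_mult_accept_prob[OF c] by (simp add: offered_def algebra_simps)
  thus "t \<le> rho * nuhat c * (1 - frac B P c)" unfolding t_def using BU by (simp add: divide_le_eq)
qed

lemma absorbed_le_rho_tilde:
  assumes M1: "1 \<le> M" and "0 < U" "0 < rho" "0 < B"
    and nu0: "\<forall>c\<in>{1..N}. 0 \<le> nuhat c"
    and mono: "\<forall>c c'. 1 \<le> c \<and> c \<le> c' \<and> c' \<le> N \<longrightarrow> nuhat c' \<le> nuhat c"
    and warm: "1 < (\<Sum>c\<in>{M..cstar+1}. rho * nuhat c / (1 + rho * nuhat c))"
    and cN: "cstar + 1 \<le> N"
    and pl: "placement N M B P"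
  shows "absorbed N nuhat rho U B P \<le> rho_tilde M nuhat rho cstar"
proof -
  have M: "1 \<le> M" "M \<le> cstar" "cstar + 1 \<le> N"
    using M_le_cstar[OF M1 \<open>0 < rho\<close> nu0 cN warm] M1 cN by simp_all
  have nn: "\<forall>c\<in>{1..N}. 0 \<le> offered nuhat rho U B P c"
    using nu0 \<open>0 < rho\<close> by (simp add: offered_nonneg)
  let ?t = "\<lambda>c. mean_downloads N nuhat rho U B P c / (real B * real U)"
  have "(\<Sum>c\<in>{1..N}. rho * nuhat c * frac B P c + ?t c) \<le> rho_tilde M nuhat rho cstar"
    unfolding rho_tilde_def
  proof (rule lp_value_bound[OF M])
    show "\<forall>c\<in>{1..N}. 0 \<le> rho * nuhat c" using nu0 \<open>0 < rho\<close> by simp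
    show "\<forall>c c'. 1 \<le> c \<and> c \<le> c' \<and> c' \<le> N \<longrightarrow> rho * nuhat c' \<le> rho * nuhat c"
      using mono \<open>0 < rho\<close> by simp
    show "(\<Sum>c\<in>{1..N}. frac B P c) \<le> real M" using sum_frac_le[OF pl \<open>0 < B\<close>] .
    show "(\<Sum>c\<in>{1..N}. ?t c) \<le> 1"
      using sum_mean_downloads_le[OF nn] \<open>0 < B\<close> \<open>0 < U\<close> by (simp add: sum_divide_distrib[symmetric])
    show "\<forall>c\<in>{1..N}. 0 \<le> frac B P c \<and> frac B P c \<le> 1 \<and> 0 \<le> ?t c \<and> ?t c \<le> frac B P c \<and>
        ?t c \<le> rho * nuhat c * (1 - frac B P c)"
      using download_share_bounds[OF \<open>0 < B\<close> \<open>0 < U\<close> nn] frac_nonneg frac_le_1 by blast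
  qed
  thus ?thesis using absorbed_eq_sum[OF \<open>0 < B\<close> \<open>0 < U\<close> nn] by simp
qed

section \<open>Erlang loss systems\<close>

definition erlang_mean :: "real \<Rightarrow> nat \<Rightarrow> real" where
  "erlang_mean a C = (\<Sum>k\<le>C. real k * poisson_term a k) / (\<Sum>k\<le>C. poisson_term a k)"

definition erlang_blocking :: "real \<Rightarrow> nat \<Rightarrow> real" where
  "erlang_blocking a C = poisson_term a C / (\<Sum>k\<le>C. poisson_term a k)"

lemma poisson_sum_pos: "0 \<le> a \<Longrightarrow> 0 < (\<Sum>k\<le>C. poisson_term a k)"
  using member_le_sum[of 0 "{..C}" "poisson_term a"] poisson_term_nonneg by fastforce

lemma sum_mult_poisson_term: "(\<Sum>k\<le>C. real k * poisson_term a k) = a * (\<Sum>k<C. poisson_term a k)"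
proof (induction C)
  case (Suc C)
  thus ?case using poisson_term_Suc[of C a] by (simp add: algebra_simps del: of_nat_Suc)
qed simp

lemma erlang_mean_eq: "0 \<le> a \<Longrightarrow> erlang_mean a C = a * (1 - erlang_blocking a C)"
proof -
  assume "0 \<le> a"
  moreover have "(\<Sum>k\<le>C. poisson_term a k) = (\<Sum>k<C. poisson_term a k) + poisson_term a C"
    by (simp add: lessThan_Suc_atMost[symmetric])
  ultimately show ?thesis using poisson_sum_pos[of a C]
    by (simp add: erlang_mean_def erlang_blocking_def sum_mult_poisson_term field_simps)
qed

lemma erlang_mean_nonneg: "0 \<le> a \<Longrightarrow> 0 \<le> erlang_mean a C"
  by (simp add: erlang_mean_def poisson_term_nonneg sum_nonneg)

lemma erlang_mean_le: "0 \<le> a \<Longrightarrow> erlang_mean a C \<le> real C"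
proof -
  assume a: "0 \<le> a"
  have "(\<Sum>k\<le>C. real k * poisson_term a k) \<le> (\<Sum>k\<le>C. real C * poisson_term a k)"
    using poisson_term_nonneg[OF a] by (intro sum_mono mult_right_mono) auto
  thus ?thesis using poisson_sum_pos[OF a]
    by (simp add: erlang_mean_def divide_le_eq sum_distrib_left)
qed

text \<open>With \<open>s = a'/a \<ge> 1\<close> and \<open>D\<close> the mean at load \<open>a\<close>, the terms \<open>(k - D)(s\<^sup>k - s\<^sup>D)\<close>
  are nonnegative, so reweighting by \<open>s\<^sup>k\<close> cannot decrease \<open>\<Sum> (k - D) a\<^sup>k/k!\<close> below zero.\<close>
lemma erlang_mean_mono:
  assumes a: "0 < a" and aa: "a \<le> a'"
  shows "erlang_mean a C \<le> erlang_mean a' C"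
proof -
  define D where "D = erlang_mean a C"
  define s where "s = a' / a"
  have s1: "1 \<le> s" unfolding s_def using a aa by simp
  have Z: "0 < (\<Sum>k\<le>C. poisson_term a k)" "0 < (\<Sum>k\<le>C. poisson_term a' k)"
    using poisson_sum_pos a aa by auto
  have "D * (\<Sum>k\<le>C. poisson_term a k) = (\<Sum>k\<le>C. real k * poisson_term a k)"
    unfolding D_def erlang_mean_def using Z(1) by simp
  hence centred: "(\<Sum>k\<le>C. poisson_term a k * (real k - D)) = 0"
    by (simp add: algebra_simps sum_subtractf sum_distrib_left)
  have tilt: "poisson_term a' k = poisson_term a k * s ^ k" for k
    unfolding poisson_term_def s_def using a by (simp add: power_divide)
  have term_ge: "poisson_term a k * (real k - D) * s powr D \<le> poisson_term a k * (real k - D) * s ^ k" for k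
  proof -
    have "0 \<le> (real k - D) * (s powr real k - s powr D)"
      using powr_mono[OF _ s1, of D "real k"] powr_mono[OF _ s1, of "real k" D]
      by (cases "D \<le> real k") (auto intro: mult_nonpos_nonpos)
    hence "0 \<le> poisson_term a k * ((real k - D) * (s powr real k - s powr D))"
      using poisson_term_nonneg[of a k] a by simp
    thus ?thesis using s1 by (simp add: powr_realpow algebra_simps)
  qed
  have "0 = (\<Sum>k\<le>C. poisson_term a k * (real k - D) * s powr D)"
    using centred by (simp add: sum_distrib_right[symmetric])
  also have "\<dots> \<le> (\<Sum>k\<le>C. poisson_term a' k * (real k - D))"
    unfolding tilt using term_ge by (intro sum_mono) (simp add: algebra_simps)
  finally have "D * (\<Sum>k\<le>C. poisson_term a' k) \<le> (\<Sum>k\<le>C. real k * poisson_term a' k)"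
    by (simp add: algebra_simps sum_subtractf sum_distrib_left)
  thus ?thesis unfolding D_def[symmetric] erlang_mean_def[of a' C] using Z(2) by (simp add: le_divide_eq)
qed

lemma fact_add_ge: "fact m * real (m + 1) ^ j \<le> (fact (m + j) :: real)"
proof (induction j)
  case (Suc j)
  have "fact m * real (m + 1) ^ Suc j \<le> real (m + Suc j) * (fact m * real (m + 1) ^ j)"
    by (simp add: mult_right_mono)
  also have "\<dots> \<le> real (m + Suc j) * fact (m + j)"
    using Suc by (intro mult_left_mono) auto
  finally show ?case by simp
qed simp

lemma erlang_blocking_le:
  assumes a: "0 < a"
  shows "erlang_blocking a (m + j) \<le> (a / real (m + 1)) ^ j"
proof -
  have tm: "0 < poisson_term a m" unfolding poisson_term_def using a by simp
  have "poisson_term a m \<le> (\<Sum>k\<le>m + j. poisson_term a k)"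
    using poisson_term_nonneg[of a] a by (intro member_le_sum) auto
  hence "erlang_blocking a (m + j) \<le> poisson_term a (m + j) / poisson_term a m"
    unfolding erlang_blocking_def using tm poisson_term_nonneg[of a "m + j"] a
    by (intro divide_left_mono) auto
  also have "\<dots> = a ^ j * (fact m / fact (m + j))"
    unfolding poisson_term_def using a by (simp add: field_simps power_add)
  also have "\<dots> \<le> a ^ j * (1 / real (m + 1) ^ j)"
    using fact_add_ge[of m j] a by (intro mult_left_mono) (simp_all add: field_simps)
  finally show ?thesis by (simp add: power_divide)
qed

text \<open>A fraction \<open>(1 - \<theta>)/2\<close> of the \<open>C\<close> servers lies above \<open>(1 + \<theta>)C/2\<close>, where the
  Poisson terms of load \<open>\<theta>C\<close> decrease geometrically with ratio \<open>2\<theta>/(1 + \<theta>)\<close>.\<close>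
lemma erlang_blocking_underloaded:
  assumes t0: "0 < \<theta>" and t1: "\<theta> < 1" and C: "0 < C"
  shows "erlang_blocking (\<theta> * real C) C \<le> (2 * \<theta> / (1 + \<theta>)) ^ nat \<lfloor>(1 - \<theta>) / 2 * real C\<rfloor>"
proof -
  define j where "j = nat \<lfloor>(1 - \<theta>) / 2 * real C\<rfloor>"
  have "real j = of_int \<lfloor>(1 - \<theta>) / 2 * real C\<rfloor>"
    unfolding j_def using t1 by (intro of_nat_nat) simp
  hence jle: "real j \<le> (1 - \<theta>) / 2 * real C" by linarith
  hence jC: "j \<le> C"
    using mult_right_mono[of "(1 - \<theta>) / 2" 1 "real C"] t0 by simp
  define m where "m = C - j"
  have Cmj: "C = m + j" unfolding m_def using jC by simp
  have a0: "0 < \<theta> * real C" using t0 C by simp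
  have m1: "(1 + \<theta>) / 2 * real C \<le> real (m + 1)"
    using jle jC by (simp add: m_def of_nat_diff field_simps)
  have "erlang_blocking (\<theta> * real C) C \<le> (\<theta> * real C / real (m + 1)) ^ j"
    using erlang_blocking_le[OF a0, of m j] Cmj by simp
  also have "\<dots> \<le> (\<theta> * real C / ((1 + \<theta>) / 2 * real C)) ^ j"
    using m1 a0 t0 C by (intro power_mono divide_left_mono) auto
  also have "\<theta> * real C / ((1 + \<theta>) / 2 * real C) = \<theta> / ((1 + \<theta>) / 2)"
    using C by (intro nonzero_mult_divide_mult_cancel_right) simp
  also have "\<dots> = 2 * \<theta> / (1 + \<theta>)" by simp
  finally show ?thesis unfolding j_def .
qed

lemma erlang_mean_lower_bound:
  assumes t0: "0 < \<theta>" and t1: "\<theta> < 1" and C: "0 < C" and a: "\<theta> * real C \<le> a"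
  shows "\<theta> * real C * (1 - (2 * \<theta> / (1 + \<theta>)) ^ nat \<lfloor>(1 - \<theta>) / 2 * real C\<rfloor>) \<le> erlang_mean a C"
proof -
  have "\<theta> * real C * (1 - (2 * \<theta> / (1 + \<theta>)) ^ nat \<lfloor>(1 - \<theta>) / 2 * real C\<rfloor>)
      \<le> \<theta> * real C * (1 - erlang_blocking (\<theta> * real C) C)"
    using erlang_blocking_underloaded[OF t0 t1 C] t0 by (intro mult_left_mono) auto
  also have "\<dots> = erlang_mean (\<theta> * real C) C" using t0 by (simp add: erlang_mean_eq)
  also have "\<dots> \<le> erlang_mean a C" using t0 C a by (intro erlang_mean_mono) auto
  finally show ?thesis .
qed

lemma filterlim_at_top_if_ratio_tendsto_pos:
  fixes f s :: "nat \<Rightarrow> real"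
  assumes "(\<lambda>B. f B / s B) \<longlonglongrightarrow> y" "0 < y" "filterlim s at_top sequentially"
  shows "filterlim f at_top sequentially"
proof -
  have "filterlim (\<lambda>B. f B / s B * s B) at_top sequentially"
    by (rule filterlim_tendsto_pos_mult_at_top[OF assms])
  moreover have "eventually (\<lambda>B. 0 < s B) sequentially"
    using assms(3) by (simp add: filterlim_at_top_dense)
  hence "eventually (\<lambda>B. f B / s B * s B = f B) sequentially"
    by eventually_elim simp
  ultimately show ?thesis using filterlim_cong by fastforce
qed

lemma underloaded_bound_tendsto:
  fixes s :: "nat \<Rightarrow> real" and C :: "nat \<Rightarrow> nat"
  assumes Cy: "(\<lambda>B. real (C B) / s B) \<longlonglongrightarrow> y" and Cinf: "filterlim (\<lambda>B. real (C B)) at_top sequentially"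
    and t0: "0 < \<theta>" and t1: "\<theta> < 1"
  shows "(\<lambda>B. \<theta> * (real (C B) / s B) * (1 - (2 * \<theta> / (1 + \<theta>)) ^ nat \<lfloor>(1 - \<theta>) / 2 * real (C B)\<rfloor>))
    \<longlonglongrightarrow> \<theta> * y"
proof -
  have "0 < (1 - \<theta>) / 2" using t1 by simp
  from filterlim_tendsto_pos_mult_at_top[OF tendsto_const this Cinf]
  have "filterlim (\<lambda>B. \<lfloor>(1 - \<theta>) / 2 * real (C B)\<rfloor>) at_top sequentially"
    by (rule filterlim_compose[OF filterlim_floor_sequentially])
  hence "filterlim (\<lambda>B. nat \<lfloor>(1 - \<theta>) / 2 * real (C B)\<rfloor>) sequentially sequentially"
    by (rule filterlim_compose[OF filterlim_nat_sequentially])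
  hence "(\<lambda>B. (2 * \<theta> / (1 + \<theta>)) ^ nat \<lfloor>(1 - \<theta>) / 2 * real (C B)\<rfloor>) \<longlonglongrightarrow> 0"
    by (rule tendsto_power_zero) (use t0 t1 in simp)
  hence "(\<lambda>B. \<theta> * (real (C B) / s B) * (1 - (2 * \<theta> / (1 + \<theta>)) ^ nat \<lfloor>(1 - \<theta>) / 2 * real (C B)\<rfloor>))
      \<longlonglongrightarrow> \<theta> * y * (1 - 0)"
    by (intro tendsto_intros Cy)
  thus ?thesis by simp
qed

text \<open>If the load exceeds the capacity \<open>C\<close> asymptotically, compare with the underloaded system
  of load \<open>\<theta>C\<close>, for \<open>\<theta> < 1\<close> close to 1, whose blocking vanishes geometrically.\<close>
lemma erlang_mean_eventually_gt:
  fixes a s :: "nat \<Rightarrow> real" and C :: "nat \<Rightarrow> nat"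
  assumes ax: "(\<lambda>B. a B / s B) \<longlonglongrightarrow> x" and Cy: "(\<lambda>B. real (C B) / s B) \<longlonglongrightarrow> y"
    and yx: "y \<le> x" and sinf: "filterlim s at_top sequentially" and l: "0 \<le> l" "l < y"
  shows "eventually (\<lambda>B. l < erlang_mean (a B) (C B) / s B) sequentially"
proof -
  have y0: "0 < y" using l by simp
  define \<theta> where "\<theta> = (l / y + 1) / 2"
  have "0 \<le> l / y" "l / y < 1" using l y0 by simp_all
  hence t0: "0 < \<theta>" and t1: "\<theta> < 1" unfolding \<theta>_def by simp_all
  have ty: "\<theta> * y = (l + y) / 2" unfolding \<theta>_def using y0 by (simp add: field_simps)
  let ?g = "\<lambda>B. 1 - (2 * \<theta> / (1 + \<theta>)) ^ nat \<lfloor>(1 - \<theta>) / 2 * real (C B)\<rfloor>"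
  have Cinf: "filterlim (\<lambda>B. real (C B)) at_top sequentially"
    by (rule filterlim_at_top_if_ratio_tendsto_pos[OF Cy y0 sinf])
  have "l < \<theta> * y" using l ty by simp
  with underloaded_bound_tendsto[OF Cy Cinf t0 t1]
  have lower: "eventually (\<lambda>B. l < \<theta> * (real (C B) / s B) * ?g B) sequentially"
    by (rule order_tendstoD(1))
  have "(\<lambda>B. a B / s B - \<theta> * (real (C B) / s B)) \<longlonglongrightarrow> x - \<theta> * y"
    by (intro tendsto_intros ax Cy)
  moreover have "0 < x - \<theta> * y" using yx ty l by simp
  ultimately have overload: "eventually (\<lambda>B. 0 < a B / s B - \<theta> * (real (C B) / s B)) sequentially"
    by (rule order_tendstoD(1))
  have spos: "eventually (\<lambda>B. 0 < s B) sequentially"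
    using sinf by (simp add: filterlim_at_top_dense)
  have Cpos: "eventually (\<lambda>B. 0 < real (C B)) sequentially"
    using Cinf unfolding filterlim_at_top_dense by blast
  from spos overload Cpos lower show ?thesis
  proof eventually_elim
    case (elim B)
    have "\<theta> * real (C B) \<le> a B" using elim(1,2) by (simp add: field_simps)
    from erlang_mean_lower_bound[OF t0 t1 _ this] elim(3)
    have "\<theta> * real (C B) * ?g B / s B \<le> erlang_mean (a B) (C B) / s B"
      using elim(1) by (intro divide_right_mono) auto
    with elim(4) show ?case by (simp add: mult.assoc)
  qed
qed

lemma erlang_mean_limit:
  fixes a s :: "nat \<Rightarrow> real" and C :: "nat \<Rightarrow> nat"
  assumes a0: "\<And>B. 0 \<le> a B" and ax: "(\<lambda>B. a B / s B) \<longlonglongrightarrow> x"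
    and Cy: "(\<lambda>B. real (C B) / s B) \<longlonglongrightarrow> y"
    and yx: "y \<le> x" and sinf: "filterlim s at_top sequentially"
  shows "(\<lambda>B. erlang_mean (a B) (C B) / s B) \<longlonglongrightarrow> y"
proof -
  have spos: "eventually (\<lambda>B. 0 < s B) sequentially"
    using sinf by (simp add: filterlim_at_top_dense)
  show ?thesis
  proof (rule order_tendstoI)
    fix u assume "y < u"
    from order_tendstoD(2)[OF Cy this] spos
    show "eventually (\<lambda>B. erlang_mean (a B) (C B) / s B < u) sequentially"
    proof eventually_elim
      case (elim B)
      have "erlang_mean (a B) (C B) / s B \<le> real (C B) / s B"
        using erlang_mean_le[OF a0] elim(2) by (simp add: divide_right_mono)
      with elim(1) show ?case by linarith
    qed
  next
    fix l assume ly: "l < y"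
    show "eventually (\<lambda>B. l < erlang_mean (a B) (C B) / s B) sequentially"
    proof (cases "0 \<le> l")
      case False
      from spos show ?thesis
      proof eventually_elim
        case (elim B)
        hence "0 \<le> erlang_mean (a B) (C B) / s B" using erlang_mean_nonneg[OF a0] by simp
        with False show ?case by linarith
      qed
    qed (rule erlang_mean_eventually_gt[OF ax Cy yx sinf _ ly])
  qed
qed

section \<open>Hot-warm placements\<close>

definition hot_warm_placement :: "nat \<Rightarrow> (nat \<Rightarrow> nat set) \<Rightarrow> nat set \<Rightarrow> nat set \<Rightarrow> bool" where
  "hot_warm_placement B P H W \<longleftrightarrow> (\<forall>b<B. \<exists>w\<in>W. P b = H \<union> {w})"

lemma holders_hot_warm:
  assumes "hot_warm_placement B P H W" "H \<inter> W = {}"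
  shows "h \<in> H \<Longrightarrow> holders B P h = {..<B}"
    and "c \<notin> H \<Longrightarrow> c \<notin> W \<Longrightarrow> holders B P c = {}"
    and "c \<in> W \<Longrightarrow> c' \<in> W \<Longrightarrow> b \<in> holders B P c \<Longrightarrow> b \<in> holders B P c' \<Longrightarrow> c = c'"
  using assms unfolding hot_warm_placement_def by fastforce+

lemma split_among_boxes:
  assumes "finite K" "n \<le> U * card K"
  shows "\<exists>y. (\<forall>b. y b \<le> U) \<and> (\<forall>b. b \<notin> K \<longrightarrow> y b = 0) \<and> sum y K = n"
  using assms
proof (induction K arbitrary: n rule: finite_induct)
  case empty thus ?case by (intro exI[of _ "\<lambda>_. 0"]) simp
next
  case (insert b K)
  have "n - min n U \<le> U * card K" using insert.prems insert.hyps by (auto simp: algebra_simps)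
  then obtain y where y: "\<forall>b. y b \<le> U" "\<forall>b. b \<notin> K \<longrightarrow> y b = 0" "sum y K = n - min n U"
    using insert.IH by blast
  have "sum (y(b := min n U)) K = sum y K" using insert.hyps by (intro sum.cong) auto
  hence "sum (y(b := min n U)) (insert b K) = n" using insert.hyps y(3) by simp
  moreover have "\<forall>b'. (y(b := min n U)) b' \<le> U" "\<forall>b'. b' \<notin> insert b K \<longrightarrow> (y(b := min n U)) b' = 0"
    using y by auto
  ultimately show ?case by blast
qed

lemma allocation_within_holders:
  assumes bound: "\<forall>c\<in>W. n c \<le> U * card (holders B P c)"
  obtains x where "\<And>c b. x c b \<le> U" "\<And>c b. c \<notin> W \<or> b \<notin> holders B P c \<Longrightarrow> x c b = 0"
    "\<And>c. c \<in> W \<Longrightarrow> sum (x c) (holders B P c) = n c"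
proof -
  have "\<forall>c\<in>W. \<exists>y. (\<forall>b. y b \<le> U) \<and> (\<forall>b. b \<notin> holders B P c \<longrightarrow> y b = 0) \<and> sum y (holders B P c) = n c"
  proof
    fix c assume "c \<in> W"
    hence "n c \<le> U * card (holders B P c)" using bound by blast
    thus "\<exists>y. (\<forall>b. y b \<le> U) \<and> (\<forall>b. b \<notin> holders B P c \<longrightarrow> y b = 0) \<and> sum y (holders B P c) = n c"
      by (rule split_among_boxes[rotated]) simp
  qed
  from bchoice[OF this] obtain Y where Y: "\<forall>c\<in>W. (\<forall>b. Y c b \<le> U) \<and>
      (\<forall>b. b \<notin> holders B P c \<longrightarrow> Y c b = 0) \<and> sum (Y c) (holders B P c) = n c"
    by blast
  show ?thesis
    by (rule that[of "\<lambda>c b. if c \<in> W then Y c b else 0"]) (use Y in auto)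
qed

lemma in_states_if_disjoint_holders:
  assumes disj: "\<And>c c' b. c \<in> W \<Longrightarrow> c' \<in> W \<Longrightarrow> b \<in> holders B P c \<Longrightarrow> b \<in> holders B P c' \<Longrightarrow> c = c'"
    and WN: "W \<subseteq> {1..N}"
    and supp: "\<forall>c. c \<notin> W \<longrightarrow> n c = 0" and bound: "\<forall>c\<in>W. n c \<le> U * card (holders B P c)"
  shows "n \<in> states N B U P"
proof -
  obtain x where x_le: "\<And>c b. x c b \<le> U" and x_supp: "\<And>c b. c \<notin> W \<or> b \<notin> holders B P c \<Longrightarrow> x c b = 0"
    and x_sum: "\<And>c. c \<in> W \<Longrightarrow> sum (x c) (holders B P c) = n c"
    using allocation_within_holders[OF bound] by blast
  show ?thesis unfolding states_def feasible_def
  proof (intro CollectI conjI exI[of _ x])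
    show "\<forall>c. c \<notin> {1..N} \<longrightarrow> n c = 0" using supp WN by auto
    show "\<forall>c b. 0 < x c b \<longrightarrow> c \<in> {1..N} \<and> b < B \<and> c \<in> P b"
    proof (intro allI impI)
      fix c b assume "0 < x c b"
      hence "\<not> (c \<notin> W \<or> b \<notin> holders B P c)" using x_supp by (metis less_irrefl)
      hence "c \<in> W" "b \<in> holders B P c" by simp_all
      thus "c \<in> {1..N} \<and> b < B \<and> c \<in> P b" using WN by auto
    qed
    show "\<forall>c\<in>{1..N}. (\<Sum>b<B. x c b) = n c"
    proof
      fix c assume "c \<in> {1..N}"
      show "(\<Sum>b<B. x c b) = n c"
      proof (cases "c \<in> W")
        case True
        have "(\<Sum>b<B. x c b) = (\<Sum>b\<in>holders B P c. x c b)"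
          using x_supp by (intro sum.mono_neutral_right) auto
        thus ?thesis using True x_sum by simp
      qed (use supp x_supp in simp)
    qed
    show "\<forall>b<B. (\<Sum>c\<in>{1..N}. x c b) \<le> U"
    proof (intro allI impI)
      fix b assume "b < B"
      show "(\<Sum>c\<in>{1..N}. x c b) \<le> U"
      proof (cases "\<exists>w\<in>W. b \<in> holders B P w")
        case True
        then obtain w where w: "w \<in> W" "b \<in> holders B P w" by blast
        have "x c b = 0" if "c \<noteq> w" for c
          using disj[OF _ w(1) _ w(2), of c] x_supp[of c b] that by blast
        hence "(\<Sum>c\<in>{1..N}. x c b) = (\<Sum>c\<in>{w}. x c b)"
          using w WN by (intro sum.mono_neutral_right) auto
        thus ?thesis using x_le by simp
      qed (use x_supp in simp)
    qed
  qed
qed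

lemma hot_warm_states_iff:
  assumes hw: "hot_warm_placement B P H W" and HW: "H \<inter> W = {}" and HWN: "H \<union> W \<subseteq> {1..N}"
    and nH: "\<forall>h\<in>H. n h = 0"
  shows "n \<in> states N B U P \<longleftrightarrow> (\<forall>c. c \<notin> W \<longrightarrow> n c = 0) \<and> (\<forall>c\<in>W. n c \<le> U * card (holders B P c))"
proof
  assume "n \<in> states N B U P"
  hence f: "feasible N B U P n" unfolding states_def by simp
  have "n c = 0" if "c \<notin> W" "c \<notin> H" "c \<in> {1..N}" for c
  proof -
    have "n c \<le> U * card (holders B P c)" by (rule feasible_le_holders[OF f that(3)])
    thus ?thesis using holders_hot_warm(2)[OF hw HW that(2,1)] by (metis card.empty mult_0_right le_zero_eq)
  qed
  moreover have "n c = 0" if "c \<notin> {1..N}" for c using feasible_outside_catalogue[OF f that] .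
  moreover have "n c \<le> U * card (holders B P c)" if "c \<in> W" for c
    using feasible_le_holders[OF f] that HWN by blast
  ultimately show "(\<forall>c. c \<notin> W \<longrightarrow> n c = 0) \<and> (\<forall>c\<in>W. n c \<le> U * card (holders B P c))"
    using nH by blast
next
  assume n: "(\<forall>c. c \<notin> W \<longrightarrow> n c = 0) \<and> (\<forall>c\<in>W. n c \<le> U * card (holders B P c))"
  have "W \<subseteq> {1..N}" using HWN by simp
  with n show "n \<in> states N B U P"
    using in_states_if_disjoint_holders[OF holders_hot_warm(3)[OF hw HW]] by simp
qed

lemma sum_product_coordinate:
  fixes T :: "(nat \<Rightarrow> nat) set" and g \<phi> :: "nat \<Rightarrow> real" and w :: "(nat \<Rightarrow> nat) \<Rightarrow> real"
  assumes T1: "\<forall>n\<in>T. n c \<le> C \<and> n(c := 0) \<in> T"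
    and T2: "\<forall>r\<in>T. r c = 0 \<longrightarrow> (\<forall>k\<le>C. r(c := k) \<in> T)"
    and w: "\<forall>n. w n = g (n c) * w (n(c := 0))"
  shows "(\<Sum>n\<in>T. w n * \<phi> (n c)) = (\<Sum>k\<le>C. \<phi> k * g k) * (\<Sum>r\<in>{r\<in>T. r c = 0}. w r)"
proof -
  let ?R = "{r\<in>T. r c = 0}"
  have bij: "bij_betw (\<lambda>(k, r). r(c := k)) ({..C} \<times> ?R) T"
    by (rule bij_betw_byWitness[where f' = "\<lambda>n. (n c, n(c := 0))"]) (use T1 T2 in auto)
  have "(\<Sum>n\<in>T. w n * \<phi> (n c)) = (\<Sum>(k, r)\<in>{..C} \<times> ?R. w (r(c := k)) * \<phi> k)"
    by (subst sum.reindex_bij_betw[OF bij, symmetric]) (simp add: case_prod_unfold)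
  also have "\<dots> = (\<Sum>(k, r)\<in>{..C} \<times> ?R. (\<phi> k * g k) * w r)"
  proof (rule sum.cong[OF refl], clarify)
    fix k r assume "r \<in> T" "r c = 0"
    hence "r(c := k, c := 0) = r" by auto
    thus "w (r(c := k)) * \<phi> k = \<phi> k * g k * w r" using w[rule_format, of "r(c := k)"] by simp
  qed
  also have "\<dots> = (\<Sum>k\<le>C. \<phi> k * g k) * (\<Sum>r\<in>?R. w r)"
    by (simp add: sum.cartesian_product[symmetric] sum_product)
  finally show ?thesis .
qed

lemma mean_downloads_no_traffic:
  assumes "c \<in> {1..N}" "offered nuhat rho U B P c = 0"
  shows "mean_downloads N nuhat rho U B P c = 0"
  using offered_mult_accept_prob[OF assms(1), of nuhat rho U B P] assms(2) by simp

lemma mean_downloads_warm: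
  assumes hw: "hot_warm_placement B P H W" and HW: "H \<inter> W = {}" and HWN: "H \<union> W \<subseteq> {1..N}"
    and cW: "c \<in> W"
    and nn: "\<forall>c\<in>{1..N}. 0 \<le> offered nuhat rho U B P c"
    and hot: "\<forall>h\<in>H. offered nuhat rho U B P h = 0"
  shows "mean_downloads N nuhat rho U B P c =
    erlang_mean (offered nuhat rho U B P c) (U * card (holders B P c))"
proof -
  let ?S = "states N B U P" and ?w = "weight N nuhat rho U B P"
  let ?S' = "{n \<in> ?S. \<forall>h\<in>H. n h = 0}"
  let ?C = "U * card (holders B P c)" and ?a = "offered nuhat rho U B P c"
  have cN: "c \<in> {1..N}" and cH: "c \<notin> H" using cW HW HWN by auto
  have hot_weight: "?w n = 0" if busy: "\<exists>h\<in>H. n h \<noteq> 0" for n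
  proof -
    obtain h where h: "h \<in> H" "n h \<noteq> 0" using busy by blast
    have "h \<in> {1..N}" using h HWN by auto
    thus ?thesis using weight_factor[of h N nuhat rho U B P n] hot h by (simp add: poisson_term_def)
  qed
  have restrict: "(\<Sum>n\<in>?S. ?w n * \<phi> n) = (\<Sum>n\<in>?S'. ?w n * \<phi> n)" for \<phi> :: "(nat \<Rightarrow> nat) \<Rightarrow> real"
    by (rule sum.mono_neutral_right) (use finite_states hot_weight in auto)
  have S': "?S' = {n. (\<forall>h\<in>H. n h = 0) \<and> (\<forall>c. c \<notin> W \<longrightarrow> n c = 0) \<and> (\<forall>c\<in>W. n c \<le> U * card (holders B P c))}"
    using hot_warm_states_iff[OF hw HW HWN] by auto
  have T1: "\<forall>n\<in>?S'. n c \<le> ?C \<and> n(c := 0) \<in> ?S'"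
    unfolding S' using cW by auto
  have T2: "\<forall>r\<in>?S'. r c = 0 \<longrightarrow> (\<forall>k\<le>?C. r(c := k) \<in> ?S')"
    unfolding S' using cW cH by auto
  have w: "\<forall>n. ?w n = poisson_term ?a (n c) * ?w (n(c := 0))"
    using weight_factor[OF cN] by blast
  let ?R = "{r \<in> ?S'. r c = 0}"
  have "?w (\<lambda>_. 0) \<le> (\<Sum>r\<in>?R. ?w r)"
    using weight_nonneg[OF nn] finite_states zero_in_states by (intro member_le_sum) auto
  hence R: "0 < (\<Sum>r\<in>?R. ?w r)" by (simp add: weight_zero_state)
  show ?thesis
    unfolding mean_downloads_def erlang_mean_def
    using restrict[of "\<lambda>n. real (n c)"] restrict[of "\<lambda>_. 1"] R
      sum_product_coordinate[OF T1 T2 w, of real] sum_product_coordinate[OF T1 T2 w, of "\<lambda>_. 1"]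
    by simp
qed

section \<open>The hot-warm-cold limit\<close>

lemma absorbed_hot_warm:
  assumes B: "0 < B" and U: "0 < U"
    and hw: "hot_warm_placement B P H W" and HW: "H \<inter> W = {}" and HWN: "H \<union> W \<subseteq> {1..N}"
    and nn: "\<forall>c\<in>{1..N}. 0 \<le> offered nuhat rho U B P c"
  shows "absorbed N nuhat rho U B P = (\<Sum>c\<in>H. rho * nuhat c) +
    (\<Sum>c\<in>W. rho * nuhat c * frac B P c +
       erlang_mean (offered nuhat rho U B P c) (U * card (holders B P c)) / (real B * real U))"
proof -
  define t where "t c = rho * nuhat c * frac B P c + mean_downloads N nuhat rho U B P c / (real B * real U)" for c
  have frac_hot: "frac B P h = 1" if "h \<in> H" for h
    using holders_hot_warm(1)[OF hw HW that] B by (simp add: frac_def)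
  have offered_hot: "\<forall>h\<in>H. offered nuhat rho U B P h = 0"
    using frac_hot by (simp add: offered_def)
  have cold: "t c = 0" if "c \<in> {1..N} - (H \<union> W)" for c
  proof -
    have "holders B P c = {}" using holders_hot_warm(2)[OF hw HW] that by blast
    hence none: "card (holders B P c) = 0" by (simp only: card.empty)
    have "mean_downloads N nuhat rho U B P c \<le> real U * real (card (holders B P c))"
      using mean_downloads_le_holders[OF nn] that by blast
    hence "mean_downloads N nuhat rho U B P c = 0"
      unfolding none using mean_downloads_nonneg[OF nn, of c] by simp
    thus ?thesis unfolding t_def frac_def none by simp
  qed
  have "(\<Sum>c\<in>{1..N}. t c) = (\<Sum>c\<in>H \<union> W. t c)"
    using HWN cold by (intro sum.mono_neutral_right) auto
  also have "\<dots> = (\<Sum>c\<in>H. t c) + (\<Sum>c\<in>W. t c)"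
    using HW finite_subset[OF HWN] by (intro sum.union_disjoint) auto
  also have "(\<Sum>c\<in>H. t c) = (\<Sum>c\<in>H. rho * nuhat c)"
    using frac_hot offered_hot mean_downloads_no_traffic HWN by (intro sum.cong) (auto simp: t_def)
  also have "(\<Sum>c\<in>W. t c) = (\<Sum>c\<in>W. rho * nuhat c * frac B P c +
       erlang_mean (offered nuhat rho U B P c) (U * card (holders B P c)) / (real B * real U))"
    using mean_downloads_warm[OF hw HW HWN _ nn offered_hot] by (simp add: t_def)
  finally show ?thesis using absorbed_eq_sum[OF B U nn] by (simp add: t_def)
qed

text \<open>Each warm content is critically or over-loaded: \<open>m \<le> \<rho>(1 - m)\<close> says the demand
  \<open>\<rho>(1 - m)BU\<close> it generates is at least the bandwidth \<open>mBU\<close> of its holders.\<close>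
lemma erlang_share_tendsto:
  assumes U: "0 < U" and nu: "0 \<le> nuhat c" and rho: "0 \<le> rho"
    and f: "(\<lambda>B. frac B (P B) c) \<longlonglongrightarrow> m" and load: "m \<le> rho * nuhat c * (1 - m)"
  shows "(\<lambda>B. erlang_mean (offered nuhat rho U B (P B) c) (U * card (holders B (P B) c)) / (real B * real U)) \<longlonglongrightarrow> m"
proof (rule erlang_mean_limit[OF _ _ _ load])
  show "0 \<le> offered nuhat rho U B (P B) c" for B using nu rho by (rule offered_nonneg)
  have "eventually (\<lambda>B. rho * nuhat c * (1 - frac B (P B) c) = offered nuhat rho U B (P B) c / (real B * real U)) sequentially"
    using eventually_gt_at_top[of 0] by eventually_elim (use U in \<open>simp add: offered_def\<close>)
  moreover have "(\<lambda>B. rho * nuhat c * (1 - frac B (P B) c)) \<longlonglongrightarrow> rho * nuhat c * (1 - m)"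
    by (intro tendsto_intros f)
  ultimately show "(\<lambda>B. offered nuhat rho U B (P B) c / (real B * real U)) \<longlonglongrightarrow> rho * nuhat c * (1 - m)"
    by (rule Lim_transform_eventually[rotated])
  have "eventually (\<lambda>B. frac B (P B) c = real (U * card (holders B (P B) c)) / (real B * real U)) sequentially"
    using eventually_gt_at_top[of 0] by eventually_elim (use U in \<open>simp add: frac_def\<close>)
  thus "(\<lambda>B. real (U * card (holders B (P B) c)) / (real B * real U)) \<longlonglongrightarrow> m"
    by (rule Lim_transform_eventually[OF f])
  show "filterlim (\<lambda>B. real B * real U) at_top sequentially"
    using U by (intro filterlim_at_top_mult_tendsto_pos[OF tendsto_const _ filterlim_real_sequentially]) simp
qed

lemma mult_ratio_add_ratio:
  assumes "0 \<le> (x::real)" shows "x * (x / (1 + x)) + x / (1 + x) = x"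
proof -
  have "x * (x / (1 + x)) + x / (1 + x) = x * (1 + x) / (1 + x)"
    by (simp add: algebra_simps add_divide_distrib)
  thus ?thesis using assms by simp
qed

lemma hwc_frac_load:
  assumes rho: "0 \<le> rho" and nu: "0 \<le> nuhat c" and c: "c \<in> {M..cstar+1}"
    and warm: "1 < (\<Sum>d\<in>{M..cstar+1}. rho * nuhat d / (1 + rho * nuhat d))"
  shows "hwc_frac M nuhat rho cstar c \<le> rho * nuhat c * (1 - hwc_frac M nuhat rho cstar c)"
proof (cases "c \<le> cstar")
  case True
  thus ?thesis using mult_ratio_add_ratio[of "rho * nuhat c"] rho nu by (simp add: hwc_frac_def algebra_simps)
next
  case False
  hence "c = Suc cstar" using c by simp
  hence "hwc_frac M nuhat rho cstar c < rho * nuhat c / (1 + rho * nuhat c)"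
    using warm c by (simp add: hwc_frac_def)
  moreover have "0 < 1 + rho * nuhat c" using mult_nonneg_nonneg[OF rho nu] by linarith
  ultimately have "hwc_frac M nuhat rho cstar c * (1 + rho * nuhat c) < rho * nuhat c"
    by (simp add: pos_less_divide_eq)
  thus ?thesis by (simp add: algebra_simps)
qed

lemma hwc_limit_eq_rho_tilde:
  assumes M: "1 \<le> M" "M \<le> cstar" and rho: "0 \<le> rho" and nu: "\<forall>c\<in>{M..cstar}. 0 \<le> nuhat c"
  defines "m \<equiv> hwc_frac M nuhat rho cstar"
  shows "(\<Sum>c\<in>{1..M-1}. rho * nuhat c) + (\<Sum>c\<in>{M..cstar+1}. rho * nuhat c * m c + m c)
    = rho_tilde M nuhat rho cstar"
proof -
  have "rho * nuhat c * m c + m c = rho * nuhat c" if "c \<in> {M..cstar}" for c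
    using that nu rho mult_ratio_add_ratio[of "rho * nuhat c"] by (simp add: m_def hwc_frac_def)
  hence "(\<Sum>c\<in>{M..cstar+1}. rho * nuhat c * m c + m c) =
      (\<Sum>c\<in>{M..cstar}. rho * nuhat c) + (rho * nuhat (cstar+1) + 1) * m (cstar+1)"
    using M by (simp add: algebra_simps)
  moreover have "{1..M-1} = {1..<M}" using M by auto
  ultimately show ?thesis
    using sum_hot_warm_split[OF M, of "\<lambda>c. rho * nuhat c"]
    by (simp add: rho_tilde_def m_def hwc_frac_def)
qed

lemma absorbed_hwc_tendsto:
  assumes M1: "1 \<le> M" and U: "0 < U" and rho: "0 < rho"
    and nu: "\<forall>c\<in>{1..N}. 0 \<le> nuhat c"
    and warm: "1 < (\<Sum>c\<in>{M..cstar+1}. rho * nuhat c / (1 + rho * nuhat c))"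
    and cN: "cstar + 1 \<le> N"
    and hwc: "hwc_seq N M nuhat rho cstar P"
  shows "(\<lambda>B. absorbed N nuhat rho U B (P B)) \<longlonglongrightarrow> rho_tilde M nuhat rho cstar"
proof -
  define H where "H = {1..M-1}"
  define W where "W = {M..cstar+1}"
  define m where "m = hwc_frac M nuhat rho cstar"
  have Mc: "M \<le> cstar" using M_le_cstar[OF M1 rho nu cN warm] .
  have HW: "H \<inter> W = {}" and HWN: "H \<union> W \<subseteq> {1..N}" and nuW: "\<forall>c\<in>W. 0 \<le> nuhat c"
    unfolding H_def W_def using M1 Mc cN nu by auto
  have hw: "hot_warm_placement B (P B) H W" for B
    using conjunct1[OF hwc[unfolded hwc_seq_def]] unfolding hot_warm_placement_def H_def W_def by simp
  have frac_lim: "(\<lambda>B. frac B (P B) c) \<longlonglongrightarrow> m c" if "c \<in> W" for c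
    using conjunct2[OF hwc[unfolded hwc_seq_def]] that unfolding W_def m_def by simp
  have nn: "\<forall>c\<in>{1..N}. 0 \<le> offered nuhat rho U B (P B) c" for B
    using nu rho by (simp add: offered_nonneg)
  have ev: "eventually (\<lambda>B. (\<Sum>c\<in>H. rho * nuhat c) + (\<Sum>c\<in>W. rho * nuhat c * frac B (P B) c +
      erlang_mean (offered nuhat rho U B (P B) c) (U * card (holders B (P B) c)) / (real B * real U))
      = absorbed N nuhat rho U B (P B)) sequentially"
    using eventually_gt_at_top[of 0]
    by eventually_elim (simp add: absorbed_hot_warm[OF _ U hw HW HWN nn])
  have lim: "(\<lambda>B. (\<Sum>c\<in>H. rho * nuhat c) + (\<Sum>c\<in>W. rho * nuhat c * frac B (P B) c +
      erlang_mean (offered nuhat rho U B (P B) c) (U * card (holders B (P B) c)) / (real B * real U)))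
      \<longlonglongrightarrow> (\<Sum>c\<in>H. rho * nuhat c) + (\<Sum>c\<in>W. rho * nuhat c * m c + m c)"
  proof (intro tendsto_add tendsto_const tendsto_sum tendsto_mult_left)
    fix c assume c: "c \<in> W"
    note f = frac_lim[OF c]
    show "(\<lambda>B. frac B (P B) c) \<longlonglongrightarrow> m c" by (rule f)
    show "(\<lambda>B. erlang_mean (offered nuhat rho U B (P B) c) (U * card (holders B (P B) c)) / (real B * real U))
        \<longlonglongrightarrow> m c"
      using erlang_share_tendsto[OF U _ _ f] hwc_frac_load[of rho nuhat c M cstar] nuW c rho warm
      unfolding W_def m_def by simp
  qed
  have val: "(\<Sum>c\<in>H. rho * nuhat c) + (\<Sum>c\<in>W. rho * nuhat c * m c + m c) = rho_tilde M nuhat rho cstar"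
    unfolding H_def W_def m_def using hwc_limit_eq_rho_tilde[OF M1 Mc less_imp_le[OF rho]] nuW
    unfolding W_def by simp
  show ?thesis using Lim_transform_eventually[OF lim ev] unfolding val .
qed

theorem mainTheorem3:
  fixes N M U cstar :: nat and nuhat :: "nat \<Rightarrow> real" and rho :: real
  assumes "M \<ge> 1" and "U > 0" and "rho > 0"
    and "\<forall>c\<in>{1..N}. nuhat c \<ge> 0"
    and "(\<Sum>c\<in>{1..N}. nuhat c) = 1"
    and "\<forall>c c'. 1 \<le> c \<and> c \<le> c' \<and> c' \<le> N \<longrightarrow> nuhat c' \<le> nuhat c"
    and "(\<Sum>c\<in>{M..cstar}. rho * nuhat c / (1 + rho * nuhat c)) \<le> 1"
    and "1 < (\<Sum>c\<in>{M..cstar+1}. rho * nuhat c / (1 + rho * nuhat c))"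
    and "cstar + 1 \<le> N"
  shows "(\<forall>P. hwc_seq N M nuhat rho cstar P \<longrightarrow>
            (\<lambda>B. absorbed N nuhat rho U B (P B)) \<longlonglongrightarrow> rho_tilde M nuhat rho cstar)
       \<and> (\<forall>P. (\<forall>B. placement N M B (P B)) \<longrightarrow>
            limsup (\<lambda>B. ereal (absorbed N nuhat rho U B (P B))) \<le> ereal (rho_tilde M nuhat rho cstar))"
proof (intro conjI allI impI)
  fix P assume "hwc_seq N M nuhat rho cstar P"
  thus "(\<lambda>B. absorbed N nuhat rho U B (P B)) \<longlonglongrightarrow> rho_tilde M nuhat rho cstar"
    by (rule absorbed_hwc_tendsto[OF assms(1-4,8,9)])
next
  fix P :: "nat \<Rightarrow> nat \<Rightarrow> nat set" assume pl: "\<forall>B. placement N M B (P B)"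
  have "eventually (\<lambda>B. ereal (absorbed N nuhat rho U B (P B)) \<le> ereal (rho_tilde M nuhat rho cstar)) sequentially"
    using eventually_gt_at_top[of 0]
  proof eventually_elim
    case (elim B)
    show ?case using absorbed_le_rho_tilde[OF assms(1-3) elim assms(4,6,8,9) pl[rule_format]] by simp
  qed
  thus "limsup (\<lambda>B. ereal (absorbed N nuhat rho U B (P B))) \<le> ereal (rho_tilde M nuhat rho cstar)"
    by (rule Limsup_bounded)
qed

end
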